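(* Let $\mathcal{S}$ be a parametrized system and let $\varphi$ be a parametrized formula (candidate invariant) with set of free thread-identifier variables $\mathrm{Var}(\varphi)$. Suppose the following three families of formulas are valid in the theory $T$: (P1) $\Theta(\mathrm{Var}(\varphi)) \rightarrow \varphi$; (P2) for every program location $\ell$ and every $k\in \mathrm{Var}(\varphi)$: $\varphi \wedge \tau_\ell^{(k)} \rightarrow \varphi'$; (P3) for every program location $\ell$, where $j$ is a fresh thread-identifier variable not in $\mathrm{Var}(\varphi)$: $\varphi \wedge \bigwedge_{k\in\mathrm{Var}(\varphi)} j\neq k \wedge \tau_\ell^{(j)} \rightarrow \varphi'$. Then $\mathcal{S}\vDash \Box\varphi$, i.e. $\varphi$ is a parametrized invariant of $\mathcal{S}$.
   Context: A parametrized program consists of a finite set of global variables $V_{global}$, a finite set of local variables $V_{local}$ (including a program counter $pc$ ranging over locations $1,\dots,L$), a global initial condition $\Theta_g$ over $V_{global}$, a local initial condition $\Theta_l$ over $V_{global}\cup V_{local}$, and for each location $\ell$ a transition relation $\tau_\ell$ over unprimed and primed (post-state) variables. For each $M\geq 1$, with $[M]=\{0,\dots,M-1\}$, the instance $\mathcal{S}[M]$ is the transition system with variables $V_{global}\cup\{v[a] : v\in V_{local}, a\in[M]\}$, initial condition $\Theta_g\wedge\bigwedge_{a\in[M]}\Theta_l[a]$ (replace each $v$ by $v[a]$), and transitions $\tau_\ell[a]$ for each $\ell$ and $a\in[M]$ (replace $v$ by $v[a]$ and $v'$ by $v'[a]$; all local variables of other threads are unchanged), with interleaving semantics. A run is an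 infinite sequence of states starting in an initial state with each step given by some transition. Thread identifiers form a sort $\mathsf{tid}$ (an unbounded set with only $=$ and $\neq$). For each local variable $v$ of sort $t$ there is a global array $a_v$ of sort $\mathsf{tid}\to t$, written $v(k)$ for reads and $v\{k\leftarrow e\}$ for updates. $T$ is the combination of the data theory of the program, the theory of $\mathsf{tid}$, and the theory of arrays. A parametrized formula is a first-order formula over $T$ using the global variables, the arrays $a_v$, and free variables of sort $\mathsf{tid}$ (no constant thread identifiers); $\mathrm{Var}(\varphi)$ is its set of free $\mathsf{tid}$ variables and $\varphi'$ is $\varphi$ with all program variables primed. For a set $X$ of $\mathsf{tid}$ variables, $\Theta(X)=\Theta_g\wedge\bigwedge_{k\in X}\Theta_l(k)$ where $\Theta_l(k)$ replaces each local $v$ by $v(k)$. For a $\mathsf{tid}$ variable $k$, $\tau_\ell^{(k)}$ is $\tau_\ell$ with each local $v$ replaced by $v(k)$, each $v'$ by $v'(k)$, and with all other array entries preserved (arrays $a_v'$ and $a_v$ agree except possibly at $k$). A concretization of $\varphi$ for $N$ threads is a map $\alpha:\mathrm{Var}(\varphi)\to[N]$, and $\alpha(\varphi)$ is the state predicate of $\mathcal{S}[N]$ obtained by replacing $v(k)$ by $v[\alpha(k)]$ (array updates at position $k$ are interpreted as updating $v[\alpha(k)]$ and preserving $v[a]$ for $a\neq\alpha(k)$). $\mathcal{S}\vDash\Box\varphi$ means: for every $N$ and every concretization $\alpha:\mathrm{Var}(\varphi)\to[N]$, every state of every run of $\mathcal{S}[N]$ satisfies $\alpha(\varphi)$. 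*)

theory Defs
  imports Main
begin

(* Semantic model.
   'g : valuations of the global variables V_global
   'l : valuations of the local variables V_local (including pc)
   thread identifiers (sort tid) are modelled by nat; the N threads of S[N]
   are the identifiers 0..N-1.
   A parametrized system is given by
     Theta_g :: 'g => bool, Theta_l :: 'g => 'l => bool,
     locations {1..L}, tau :: nat => 'g => 'l => 'g => 'l => bool
       (tau l g x g' x' : pre-state (g,x), post-state (g',x')).
   A parametrized formula is a predicate phi g a sigma over global valuation g,
   the arrays a :: tid => 'l (a v(k) = local valuation at k) and an assignment
   sigma :: 'v => tid of its free tid variables; its free tid variables are
   the finite set X = Var(phi). *)

type_synonym ('g,'l,'v) pformula = "'g \<Rightarrow> (nat \<Rightarrow> 'l) \<Rightarrow> ('v \<Rightarrow> nat) \<Rightarrow> bool"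

definition free_vars_within :: "'v set \<Rightarrow> ('g,'l,'v) pformula \<Rightarrow> bool" where
  "free_vars_within X phi \<longleftrightarrow>
     (\<forall>g a s s'. (\<forall>k\<in>X. s k = s' k) \<longrightarrow> phi g a s = phi g a s')"

definition Theta_X :: "('g \<Rightarrow> bool) \<Rightarrow> ('g \<Rightarrow> 'l \<Rightarrow> bool) \<Rightarrow> 'v set
     \<Rightarrow> 'g \<Rightarrow> (nat \<Rightarrow> 'l) \<Rightarrow> ('v \<Rightarrow> nat) \<Rightarrow> bool" where
  "Theta_X Tg Tl X g a s \<longleftrightarrow> Tg g \<and> (\<forall>k\<in>X. Tl g (a (s k)))"

definition tau_at :: "(nat \<Rightarrow> 'g \<Rightarrow> 'l \<Rightarrow> 'g \<Rightarrow> 'l \<Rightarrow> bool) \<Rightarrow> nat \<Rightarrow> nat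
     \<Rightarrow> 'g \<Rightarrow> (nat \<Rightarrow> 'l) \<Rightarrow> 'g \<Rightarrow> (nat \<Rightarrow> 'l) \<Rightarrow> bool" where
  "tau_at tau l k g a g' a' \<longleftrightarrow> tau l g (a k) g' (a' k) \<and> (\<forall>t. t \<noteq> k \<longrightarrow> a' t = a t)"

(* Instance S[N]: states (g, v) with v i the local valuation of thread i, i < N
   (entries v i for i >= N are not variables of S[N] and are ignored) *)
definition inst_init :: "('g \<Rightarrow> bool) \<Rightarrow> ('g \<Rightarrow> 'l \<Rightarrow> bool) \<Rightarrow> nat
     \<Rightarrow> 'g \<times> (nat \<Rightarrow> 'l) \<Rightarrow> bool" where
  "inst_init Tg Tl N st \<longleftrightarrow> Tg (fst st) \<and> (\<forall>i<N. Tl (fst st) (snd st i))"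

definition inst_step :: "nat \<Rightarrow> (nat \<Rightarrow> 'g \<Rightarrow> 'l \<Rightarrow> 'g \<Rightarrow> 'l \<Rightarrow> bool) \<Rightarrow> nat
     \<Rightarrow> 'g \<times> (nat \<Rightarrow> 'l) \<Rightarrow> 'g \<times> (nat \<Rightarrow> 'l) \<Rightarrow> bool" where
  "inst_step L tau N st st' \<longleftrightarrow>
     (\<exists>l\<in>{1..L}. \<exists>i<N.
        tau l (fst st) (snd st i) (fst st') (snd st' i) \<and>
        (\<forall>j<N. j \<noteq> i \<longrightarrow> snd st' j = snd st j))"

definition is_run :: "('g \<Rightarrow> bool) \<Rightarrow> ('g \<Rightarrow> 'l \<Rightarrow> bool) \<Rightarrow> nat
     \<Rightarrow> (nat \<Rightarrow> 'g \<Rightarrow> 'l \<Rightarrow> 'g \<Rightarrow> 'l \<Rightarrow> bool) \<Rightarrow> nat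
     \<Rightarrow> (nat \<Rightarrow> 'g \<times> (nat \<Rightarrow> 'l)) \<Rightarrow> bool" where
  "is_run Tg Tl L tau N r \<longleftrightarrow> inst_init Tg Tl N (r 0) \<and> (\<forall>n. inst_step L tau N (r n) (r (Suc n)))"

(* alpha(phi) evaluated at a state of S[N]: v(k) is read as v[alpha k];
   entries of the arrays outside [N] (which are not variables of S[N]) are
   arbitrary, and alpha(phi) must hold for every choice of them. *)
definition conc_holds :: "('g,'l,'v) pformula \<Rightarrow> nat \<Rightarrow> ('v \<Rightarrow> nat)
     \<Rightarrow> 'g \<times> (nat \<Rightarrow> 'l) \<Rightarrow> bool" where
  "conc_holds phi N alpha st \<longleftrightarrow>
     (\<forall>a. (\<forall>i<N. a i = snd st i) \<longrightarrow> phi (fst st) a alpha)"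

definition param_invariant :: "('g \<Rightarrow> bool) \<Rightarrow> ('g \<Rightarrow> 'l \<Rightarrow> bool) \<Rightarrow> nat
     \<Rightarrow> (nat \<Rightarrow> 'g \<Rightarrow> 'l \<Rightarrow> 'g \<Rightarrow> 'l \<Rightarrow> bool) \<Rightarrow> 'v set \<Rightarrow> ('g,'l,'v) pformula \<Rightarrow> bool" where
  "param_invariant Tg Tl L tau X phi \<longleftrightarrow>
     (\<forall>N alpha r n. (\<forall>k\<in>X. alpha k < N) \<longrightarrow> is_run Tg Tl L tau N r \<longrightarrow>
        conc_holds phi N alpha (r n))"

end

theory Submission
  imports Defs
begin

text \<open>A step of
  thread \<open>i\<close>, viewed on arrays, is the transition \<open>tau_at tau l i\<close>; it is covered by (P2) when
  \<open>i\<close> is the value \<open>\<alpha> k\<close> of a free variable of \<open>\<phi>\<close>, and by (P3) otherwise, since then \<open>i\<close>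
  plays the role of the fresh variable \<open>j\<close>. In this semantic reading (P3) already ranges over all
  thread identifiers avoiding \<open>\<alpha>(Var(\<phi>))\<close>.\<close>

lemma conc_holds_init:
  assumes "inst_init Tg Tl N st" and "\<forall>k\<in>X. alpha k < N"
    and "\<And>g a. Theta_X Tg Tl X g a alpha \<Longrightarrow> phi g a alpha"
  shows "conc_holds phi N alpha st"
  using assms unfolding conc_holds_def inst_init_def Theta_X_def by auto

text \<open>Array entries outside \<open>[N]\<close> are arbitrary, so an extension \<open>a'\<close> of the post-state is
  matched by the pre-state extension that differs from \<open>a'\<close> only at the moving thread.\<close>

lemma inst_step_imp_tau_at:
  assumes step: "inst_step L tau N st st'" and ext': "\<forall>j<N. a' j = snd st' j"
  obtains l i a where "l \<in> {1..L}" and "\<forall>j<N. a j = snd st j"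
    and "tau_at tau l i (fst st) a (fst st') a'"
proof -
  from step obtain l i where l: "l \<in> {1..L}" and i: "i < N"
    and t: "tau l (fst st) (snd st i) (fst st') (snd st' i)"
    and others: "\<forall>j<N. j \<noteq> i \<longrightarrow> snd st' j = snd st j"
    unfolding inst_step_def by blast
  let ?a = "a'(i := snd st i)"
  have "\<forall>j<N. ?a j = snd st j" using ext' others by auto
  moreover have "tau_at tau l i (fst st) ?a (fst st') a'"
    unfolding tau_at_def using t ext' i by auto
  ultimately show thesis using l that by blast
qed

lemma conc_holds_step:
  assumes step: "inst_step L tau N st st'" and pre: "conc_holds phi N alpha st"
    and P2: "\<And>l k g a g' a'. l \<in> {1..L} \<Longrightarrow> k \<in> X \<Longrightarrow>
               phi g a alpha \<Longrightarrow> tau_at tau l (alpha k) g a g' a' \<Longrightarrow> phi g' a' alpha"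
    and P3: "\<And>l j g a g' a'. l \<in> {1..L} \<Longrightarrow>
               phi g a alpha \<Longrightarrow> (\<forall>k\<in>X. j \<noteq> alpha k) \<Longrightarrow> tau_at tau l j g a g' a' \<Longrightarrow>
               phi g' a' alpha"
  shows "conc_holds phi N alpha st'"
  unfolding conc_holds_def
proof (intro allI impI)
  fix a' assume "\<forall>j<N. a' j = snd st' j"
  with step obtain l i a where l: "l \<in> {1..L}" and ext: "\<forall>j<N. a j = snd st j"
    and t: "tau_at tau l i (fst st) a (fst st') a'"
    by (rule inst_step_imp_tau_at)
  have "phi (fst st) a alpha" using pre ext unfolding conc_holds_def by blast
  show "phi (fst st') a' alpha"
  proof (cases "\<exists>k\<in>X. i = alpha k")
    case True
    then obtain k where "k \<in> X" and "i = alpha k" by blast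
    with P2[OF l] \<open>phi (fst st) a alpha\<close> t show ?thesis by blast
  next
    case False
    with P3[OF l] \<open>phi (fst st) a alpha\<close> t show ?thesis by blast
  qed
qed

theorem theorem1:
  fixes Tg :: "'g \<Rightarrow> bool" and Tl :: "'g \<Rightarrow> 'l \<Rightarrow> bool" and L :: nat
    and tau :: "nat \<Rightarrow> 'g \<Rightarrow> 'l \<Rightarrow> 'g \<Rightarrow> 'l \<Rightarrow> bool"
    and X :: "'v set" and phi :: "('g,'l,'v) pformula"
  assumes finX: "finite X"
    and fv: "free_vars_within X phi"
    and P1: "\<And>g a s. Theta_X Tg Tl X g a s \<Longrightarrow> phi g a s"
    and P2: "\<And>l k g a g' a' s. l \<in> {1..L} \<Longrightarrow> k \<in> X \<Longrightarrow>
               phi g a s \<Longrightarrow> tau_at tau l (s k) g a g' a' \<Longrightarrow> phi g' a' s"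
    and P3: "\<And>l j g a g' a' s. l \<in> {1..L} \<Longrightarrow>
               phi g a s \<Longrightarrow> (\<forall>k\<in>X. j \<noteq> s k) \<Longrightarrow> tau_at tau l j g a g' a' \<Longrightarrow> phi g' a' s"
  shows "param_invariant Tg Tl L tau X phi"
  unfolding param_invariant_def
proof (intro allI impI)
  fix N alpha r n
  assume alpha: "\<forall>k\<in>X. alpha k < N" and run: "is_run Tg Tl L tau N r"
  show "conc_holds phi N alpha (r n)"
  proof (induction n)
    case 0
    from run have "inst_init Tg Tl N (r 0)" unfolding is_run_def by blast
    then show ?case using alpha P1 by (rule conc_holds_init)
  next
    case (Suc n)
    from run have "inst_step L tau N (r n) (r (Suc n))" unfolding is_run_def by blast
    then show ?case using Suc P2 P3 by (rule conc_holds_step)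
  qed
qed

end
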